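(* Let $d\ge2$ and let $Q$ be a qplex containing infinitely many points of the out-sphere $S_{\rm o}$. Then there is no polytope $P$ (convex hull of finitely many points) with $P\subseteq Q$ and $B_{\rm i}\subseteq P$; i.e., no polytope inscribed in $Q$ contains the in-sphere $S_{\rm i}$.
   Context: Fix an integer $d\ge 2$. $\langle\cdot,\cdot\rangle$ is the standard inner product on $\mathbb{R}^{d^2}$, $\|\cdot\|$ the Euclidean norm. $\Delta=\{p\in\mathbb{R}^{d^2}: p(i)\ge0,\ \sum_ip(i)=1\}$; $H=\{u\in\mathbb{R}^{d^2}:\sum_i u(i)=1\}$; $c=(1/d^2,\dots,1/d^2)$. For $A\subseteq H$ the polar is $A^*=\{u\in H:\langle u,v\rangle\ge\frac{1}{d(d+1)}\ \forall v\in A\}$. Out-ball $B_{\rm o}=\{u\in H:\|u-c\|\le r_{\rm o}\}$ with $r_{\rm o}^2=\frac{d-1}{d^2(d+1)}$, and out-sphere $S_{\rm o}=\{u\in H:\|u-c\|=r_{\rm o}\}$ (its points in a qplex are called pure points). In-ball $B_{\rm i}=\{u\in H:\|u-c\|\le r_{\rm i}\}$ with $r_{\rm i}^2=\frac{1}{d^2(d^2-1)}$ and in-sphere $S_{\rm i}$ its boundary in $H$. A qplex is a set $Q\subseteq\Delta\cap B_{\rm o}$ with $Q^*=Q$. *)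

theory Defs
  imports "HOL-Analysis.Analysis"
begin

text \<open>Ambient space R^(d^2) is rendered as real^'n with CARD('n) = d^2 (assumed in the theorem).
All notions are parameterised by d.\<close>

definition prob_simplex :: "(real^'n) set" where
  "prob_simplex = {p. (\<forall>i. 0 \<le> p $ i) \<and> (\<Sum>i\<in>UNIV. p $ i) = 1}"

definition hplane :: "(real^'n) set" where
  "hplane = {u. (\<Sum>i\<in>UNIV. u $ i) = 1}"

definition centre :: "nat \<Rightarrow> real^'n" where
  "centre d = (\<chi> i. 1 / (real d)^2)"

definition polar :: "nat \<Rightarrow> (real^'n) set \<Rightarrow> (real^'n) set" where
  "polar d A = {u \<in> hplane. \<forall>v\<in>A. inner u v \<ge> 1 / (real d * (real d + 1))}"

definition r_out :: "nat \<Rightarrow> real" where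
  "r_out d = sqrt ((real d - 1) / ((real d)^2 * (real d + 1)))"

definition r_in :: "nat \<Rightarrow> real" where
  "r_in d = sqrt (1 / ((real d)^2 * ((real d)^2 - 1)))"

definition out_ball :: "nat \<Rightarrow> (real^'n) set" where
  "out_ball d = {u \<in> hplane. norm (u - centre d) \<le> r_out d}"

definition out_sphere :: "nat \<Rightarrow> (real^'n) set" where
  "out_sphere d = {u \<in> hplane. norm (u - centre d) = r_out d}"

definition in_ball :: "nat \<Rightarrow> (real^'n) set" where
  "in_ball d = {u \<in> hplane. norm (u - centre d) \<le> r_in d}"

definition in_sphere :: "nat \<Rightarrow> (real^'n) set" where
  "in_sphere d = {u \<in> hplane. norm (u - centre d) = r_in d}"

definition qplex :: "nat \<Rightarrow> (real^'n) set \<Rightarrow> bool" where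
  "qplex d Q \<longleftrightarrow> Q \<subseteq> prob_simplex \<inter> out_ball d \<and> polar d Q = Q"

end

theory Submission
  imports Defs
begin

text \<open>The balls are concentric with r_out * r_in = 1/d^2 - 1/(d(d+1)), so for a pure point p the
hyperplane {x. p \<bullet> x = 1/(d(d+1))} touches the in-ball only at c - (r_in/r_out)(p - c),
the point diametrically opposite to p as seen from the centre c. Because Q is its own polar, every
such hyperplane supports Q, hence any polytope P with B_i \<subseteq> P \<subseteq> Q; it cuts out a face of P
that contains the tangency point of p and no other one. Distinct pure points therefore give
distinct faces, but a polytope has only finitely many.\<close>

lemma finite_by_distinct_supporting_faces:
  fixes P :: "'a::euclidean_space set"
  assumes "polytope P"
    and supp: "\<And>p x. p \<in> S \<Longrightarrow> x \<in> P \<Longrightarrow> k \<le> p \<bullet> x"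
    and touch: "\<And>p. p \<in> S \<Longrightarrow> g p \<in> P \<and> p \<bullet> g p = k"
    and sep: "\<And>p q. p \<in> S \<Longrightarrow> q \<in> S \<Longrightarrow> p \<bullet> g q = k \<Longrightarrow> p = q"
  shows "finite S"
proof -
  define F where "F p = P \<inter> {x. p \<bullet> x = k}" for p
  have "F p face_of P" if "p \<in> S" for p
    unfolding F_def
    by (rule face_of_Int_supporting_hyperplane_ge[OF polytope_imp_convex[OF \<open>polytope P\<close>]])
       (use supp that in auto)
  then have "F ` S \<subseteq> {G. G face_of P}" by blast
  then have "finite (F ` S)"
    using finite_polytope_faces[OF \<open>polytope P\<close>] finite_subset by blast
  moreover have "inj_on F S"
  proof (rule inj_onI)
    fix p q assume "p \<in> S" "q \<in> S" "F p = F q"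
    then have "g q \<in> F p" using touch[of q] by (simp add: F_def)
    then show "p = q" using sep[OF \<open>p \<in> S\<close> \<open>q \<in> S\<close>] by (simp add: F_def)
  qed
  ultimately show ?thesis using finite_imageD by blast
qed

lemma inner_eq_neg_mult_imp_antiparallel:
  fixes w y :: "'a::real_inner"
  assumes "norm w = a" "a > 0" "norm y \<le> b" "w \<bullet> y = - (a * b)"
  shows "y = - ((b / a) *\<^sub>R w)"
proof -
  have "a * b \<le> a * norm y"
    using norm_cauchy_schwarz[of w "- y"] assms(1,4) by simp
  then have "norm (- y) = b" using assms(2,3) by simp
  then have "a *\<^sub>R (- y) = b *\<^sub>R w"
    using norm_cauchy_schwarz_eq[of w "- y"] assms(1,4) by simp
  then have "(1 / a) *\<^sub>R (a *\<^sub>R (- y)) = (b / a) *\<^sub>R w" by simp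
  then have "- y = (b / a) *\<^sub>R w" using assms(2) by simp
  then show ?thesis by (metis minus_minus)
qed

lemma inner_centre_hplane: "u \<in> hplane \<Longrightarrow> u \<bullet> centre d = 1 / (real d)^2"
  by (simp add: hplane_def inner_vec_def centre_def flip: sum_divide_distrib)

lemma centre_in_hplane:
  assumes "d > 0" "CARD('n) = d^2"
  shows "(centre d :: real^'n) \<in> hplane"
  using assms by (simp add: hplane_def centre_def)

lemma hplane_diff_scaleR: "u \<in> hplane \<Longrightarrow> v \<in> hplane \<Longrightarrow> u - t *\<^sub>R (v - u) \<in> hplane"
  by (simp add: hplane_def sum_subtractf flip: sum_distrib_left)

lemma r_in_pos: "d \<ge> 2 \<Longrightarrow> r_in d > 0"
proof -
  assume "d \<ge> 2"
  then have "(2::real)^2 \<le> (real d)^2" by (intro power_mono) auto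
  then have "(real d)^2 - 1 > 0" by simp
  then show ?thesis using \<open>d \<ge> 2\<close> by (simp add: r_in_def)
qed

lemma r_out_pos: "d \<ge> 2 \<Longrightarrow> r_out d > 0"
  by (simp add: r_out_def)

lemma r_out_mult_r_in:
  assumes "d \<ge> 2"
  shows "r_out d * r_in d = 1 / (real d)^2 - 1 / (real d * (real d + 1))"
proof -
  have d: "real d \<ge> 2" using assms by simp
  have "(real d - 1) / ((real d)^2 * (real d + 1)) * (1 / ((real d)^2 * ((real d)^2 - 1)))
      = (1 / ((real d)^2 * (real d + 1)))^2"
  proof -
    have "(real d)^2 - 1 = (real d - 1) * (real d + 1)" by (simp add: power2_eq_square algebra_simps)
    then show ?thesis using d by (simp add: power2_eq_square)
  qed
  then have "r_out d * r_in d = 1 / ((real d)^2 * (real d + 1))"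
    unfolding r_out_def r_in_def real_sqrt_mult[symmetric] using d by simp
  also have "\<dots> = 1 / (real d)^2 - 1 / (real d * (real d + 1))"
    using d by (simp add: power2_eq_square divide_simps)
  finally show ?thesis .
qed

definition tangency_point :: "nat \<Rightarrow> real^'n \<Rightarrow> real^'n" where
  "tangency_point d p = centre d - (r_in d / r_out d) *\<^sub>R (p - centre d)"

lemma tangency_point_unique:
  assumes "d \<ge> 2" "CARD('n) = d^2" "(p :: real^'n) \<in> out_sphere d" "x \<in> in_ball d"
    and "p \<bullet> x = 1 / (real d * (real d + 1))"
  shows "x = tangency_point d p"
proof -
  have c: "(centre d :: real^'n) \<in> hplane" using centre_in_hplane[OF _ assms(2)] assms(1) by simp
  have "p \<in> hplane" "x \<in> hplane" using assms(3,4) by (auto simp: out_sphere_def in_ball_def)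
  then have "(p - centre d) \<bullet> (x - centre d) = p \<bullet> x - 1 / (real d)^2"
    using inner_centre_hplane[OF c] inner_centre_hplane[of p d] inner_centre_hplane[of x d]
    by (simp add: inner_diff inner_commute)
  also have "\<dots> = - (r_out d * r_in d)" using assms(5) r_out_mult_r_in[OF assms(1)] by simp
  finally have "x - centre d = - ((r_in d / r_out d) *\<^sub>R (p - centre d))"
    using inner_eq_neg_mult_imp_antiparallel r_out_pos[OF assms(1)] assms(3,4)
    by (auto simp: out_sphere_def in_ball_def)
  then show ?thesis by (simp add: tangency_point_def algebra_simps)
qed

lemma tangency_point_in_in_ball:
  assumes "d \<ge> 2" "CARD('n) = d^2" "(p :: real^'n) \<in> out_sphere d"
  shows "tangency_point d p \<in> in_ball d"
proof -
  have "(centre d :: real^'n) \<in> hplane" "p \<in> hplane"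
    using centre_in_hplane[OF _ assms(2)] assms(1,3) by (auto simp: out_sphere_def)
  then have "tangency_point d p \<in> hplane"
    unfolding tangency_point_def by (rule hplane_diff_scaleR)
  moreover have "norm (tangency_point d p - centre d) = r_in d"
    using assms(3) r_in_pos[OF assms(1)] r_out_pos[OF assms(1)]
    by (simp add: tangency_point_def out_sphere_def)
  ultimately show ?thesis by (simp add: in_ball_def)
qed

lemma inner_tangency_point:
  assumes "d \<ge> 2" "CARD('n) = d^2" "(p :: real^'n) \<in> out_sphere d"
  shows "p \<bullet> tangency_point d p = 1 / (real d * (real d + 1))"
proof -
  define w where "w = p - centre d"
  have p: "p \<in> hplane" "norm w = r_out d" using assms(3) by (auto simp: out_sphere_def w_def)
  have c: "(centre d :: real^'n) \<in> hplane" using centre_in_hplane[OF _ assms(2)] assms(1) by simp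
  have "p \<bullet> w = w \<bullet> w"
    using inner_centre_hplane[OF p(1)] inner_centre_hplane[OF c]
    by (simp add: w_def inner_diff inner_commute)
  moreover have "w \<bullet> w = (r_out d)^2" using p(2) by (simp flip: power2_norm_eq_inner)
  ultimately have "p \<bullet> tangency_point d p = 1 / (real d)^2 - r_in d / r_out d * (r_out d)^2"
    using inner_centre_hplane[OF p(1)]
    by (simp add: tangency_point_def w_def[symmetric] inner_diff_right power2_norm_eq_inner)
  also have "\<dots> = 1 / (real d * (real d + 1))"
    using r_out_mult_r_in[OF assms(1)] r_out_pos[OF assms(1)]
    by (simp add: power2_eq_square mult.commute[of "r_in d"])
  finally show ?thesis .
qed

lemma tangency_point_inj:
  assumes "d \<ge> 2" "tangency_point d p = tangency_point d q"
  shows "p = q"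
  using assms r_in_pos[OF assms(1)] r_out_pos[OF assms(1)] by (simp add: tangency_point_def)

lemma qplex_inner_ge:
  assumes "qplex d Q" "p \<in> Q" "x \<in> Q"
  shows "1 / (real d * (real d + 1)) \<le> p \<bullet> x"
  using assms by (auto simp: qplex_def polar_def)

theorem mainTheorem6:
  fixes d :: nat and Q :: "(real^'n) set"
  assumes "d \<ge> 2" and "CARD('n) = d^2"
    and "qplex d Q"
    and "infinite (Q \<inter> out_sphere d)"
  shows "\<not> (\<exists>P. polytope P \<and> P \<subseteq> Q \<and> in_ball d \<subseteq> P)"
proof
  assume "\<exists>P. polytope P \<and> P \<subseteq> Q \<and> in_ball d \<subseteq> P"
  then obtain P where P: "polytope P" "P \<subseteq> Q" "in_ball d \<subseteq> P" by blast
  have "finite (Q \<inter> out_sphere d)"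
  proof (rule finite_by_distinct_supporting_faces[OF P(1), where g = "tangency_point d"])
    fix p x assume "p \<in> Q \<inter> out_sphere d" "x \<in> P"
    then show "1 / (real d * (real d + 1)) \<le> p \<bullet> x"
      using qplex_inner_ge[OF assms(3)] P(2) by blast
  next
    fix p assume "p \<in> Q \<inter> out_sphere d"
    then show "tangency_point d p \<in> P \<and> p \<bullet> tangency_point d p = 1 / (real d * (real d + 1))"
      using tangency_point_in_in_ball inner_tangency_point assms(1,2) P(3) by blast
  next
    fix p q assume "p \<in> Q \<inter> out_sphere d" "q \<in> Q \<inter> out_sphere d"
      and "p \<bullet> tangency_point d q = 1 / (real d * (real d + 1))"
    then show "p = q"
      using tangency_point_unique[OF assms(1,2)] tangency_point_in_in_ball[OF assms(1,2)]
        tangency_point_inj[OF assms(1)] by (metis IntD2)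
  qed
  then show False using assms(4) by simp
qed

end
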